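(* If $f:S\to T$ and $g:T\to U$ are non-degenerate nested tuple morphisms, then $L_{g\circ f}=L_g\circ L_f$.
   Context: A nested tuple (of positive integers) is either a positive integer (depth $0$) or a finite tuple $(X_1,\dots,X_r)$ of nested tuples (depth $>0$, rank $r$, modes $X_i$). Its flattening $X^\flat$ is the tuple of integer leaves read left to right; $\mathrm{len}(X)$ is its length, $\mathrm{entry}_i(X)$ its $i$-th entry, $\mathrm{size}(X)$ the product of its entries. Congruent nested tuples have the same nesting pattern. $\langle n\rangle_*=\{*,1,\dots,n\}$. A layout is $L=S:D$ with $S,D$ congruent nested tuples ($S$ positive, $D$ nonnegative); $L^\flat=S^\flat:D^\flat$. For a flat layout $(s_1,\dots,s_m):(d_1,\dots,d_m)$ its layout function $\Phi:[0,\prod s_i)\to\mathbb{Z}$ is $\Phi(x)=\sum_i x_id_i$ with $x_i=\lfloor x/(s_1\cdots s_{i-1})\rfloor \bmod s_i$; for a layout, $\Phi_L=\Phi_{L^\flat}$ and $\mathrm{size}(L)=\mathrm{size}(S)$. A flat layout is coalesced if no $s_i=1$ and $s_id_i\ne d_{i+1}$ for $1\le i<m$. A layout $L$ is coalesced if $L=1:0$, or $L$ has depth $0$ with shape $>1$, or $L$ has depth $1$, rank $>1$ and is a coalesced flat layout. A nested tuple $X'$ refines $X$ if either $X$ is an integer equal to $\mathrm{size}(X')$, or both have depth $>0$, the same rank, and each mode of $X'$ refines the corresponding mode of $X$. If $S'$ refines $S$ then $S'$ is obtained from $S$ by replacing its $i$-th leaf by a nested tuple $S'_i$ of size $\mathrm{entry}_i(S)$;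 for a layout $L=S':D$ its $i$-th relative mode is $S'_i:D_i$ with $D_i$ the corresponding part of $D$. $L$ is coalesced over $S$ if every relative mode is coalesced. For layouts $A,B$, the composite $B\circ A$ is the unique layout $C$ such that $\mathrm{shape}(C)$ refines $\mathrm{shape}(A)$, $C$ is coalesced over $\mathrm{shape}(A)$, the image of $\Phi_A$ lies in $[0,\mathrm{size}(B))$, and $\Phi_C=\Phi_B\circ\Phi_A$. A nested tuple morphism $f:S\to T$ is given by a pointed map $\alpha:\langle\mathrm{len}(S)\rangle_*\to\langle\mathrm{len}(T)\rangle_*$ with each $j\ne*$ having at most one preimage and $\mathrm{entry}_i(S)=\mathrm{entry}_{\alpha(i)}(T)$ whenever $\alpha(i)\ne*$. Composition of $f$ (over $\alpha$) and $g$ (over $\beta$) lies over $\beta\circ\alpha$. With $T^\flat=(t_1,\dots,t_n)$, $L_f$ has shape $S$ and stride congruent to $S$ with $i$-th flattened entry $0$ if $\alpha(i)=*$, else $\prod_{j<\alpha(i)}t_j$. $f$ is non-degenerate if $\mathrm{entry}_i(S)=1$ implies $\alpha(i)=*$. *)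

theory Defs
  imports Main
begin

datatype 'a nt = Leaf 'a | Node "'a nt list"

fun flat :: "'a nt \<Rightarrow> 'a list" where
  "flat (Leaf a) = [a]"
| "flat (Node xs) = concat (map flat xs)"

definition pos_nt :: "nat nt \<Rightarrow> bool" where
  "pos_nt X \<longleftrightarrow> (\<forall>a \<in> set (flat X). 0 < a)"

definition len :: "'a nt \<Rightarrow> nat" where
  "len X = length (flat X)"

text \<open>1-based entries.\<close>
definition entry :: "nat \<Rightarrow> 'a nt \<Rightarrow> 'a" where
  "entry i X = flat X ! (i - 1)"

definition nt_size :: "nat nt \<Rightarrow> nat" where
  "nt_size X = prod_list (flat X)"

text \<open>A layout S:D with congruent S, D is represented as a single nested tuple of
  pairs (shape entry, stride entry); congruence is then automatic.\<close>
type_synonym layout = "(nat \<times> nat) nt"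

definition shape :: "layout \<Rightarrow> nat nt" where
  "shape L = map_nt fst L"

definition stride :: "layout \<Rightarrow> nat nt" where
  "stride L = map_nt snd L"

definition is_layout :: "layout \<Rightarrow> bool" where
  "is_layout L \<longleftrightarrow> pos_nt (shape L)"

definition lsize :: "layout \<Rightarrow> nat" where
  "lsize L = nt_size (shape L)"

definition flat_phi :: "(nat \<times> nat) list \<Rightarrow> nat \<Rightarrow> nat" where
  "flat_phi sd x =
     (\<Sum>i<length sd. (x div prod_list (take i (map fst sd)) mod fst (sd ! i)) * snd (sd ! i))"

definition phi :: "layout \<Rightarrow> nat \<Rightarrow> nat" where
  "phi L x = flat_phi (flat L) x"

definition flat_coalesced :: "(nat \<times> nat) list \<Rightarrow> bool" where
  "flat_coalesced sd \<longleftrightarrow>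
     (\<forall>i<length sd. fst (sd ! i) \<noteq> 1) \<and>
     (\<forall>i. i + 1 < length sd \<longrightarrow> fst (sd ! i) * snd (sd ! i) \<noteq> snd (sd ! (i + 1)))"

fun is_leaf :: "'a nt \<Rightarrow> bool" where
  "is_leaf (Leaf _) = True"
| "is_leaf (Node _) = False"

definition coalesced :: "layout \<Rightarrow> bool" where
  "coalesced L \<longleftrightarrow>
     L = Leaf (1, 0)
   \<or> (\<exists>s d. L = Leaf (s, d) \<and> 1 < s)
   \<or> (\<exists>xs. L = Node xs \<and> (\<forall>x \<in> set xs. is_leaf x) \<and> 1 < length xs
          \<and> flat_coalesced (flat L))"

fun refines :: "nat nt \<Rightarrow> nat nt \<Rightarrow> bool" where
  "refines X' (Leaf n) \<longleftrightarrow> nt_size X' = n"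
| "refines (Leaf _) (Node _) \<longleftrightarrow> False"
| "refines (Node ys) (Node xs) \<longleftrightarrow>
     list_all2 refines ys xs"

text \<open>Relative modes of a layout C over S (meaningful when shape C refines S):
  the i-th entry is the part of C replacing the i-th leaf of S.\<close>
function (sequential) rel_modes :: "nat nt \<Rightarrow> layout \<Rightarrow> layout list" where
  "rel_modes (Leaf n) C = [C]"
| "rel_modes (Node xs) (Node ys) = concat (map (\<lambda>(x, y). rel_modes x y) (zip xs ys))"
| "rel_modes (Node xs) (Leaf _) = []"
  by pat_completeness auto
termination
  by (relation "measure (\<lambda>(x, y). size x)")
     (auto dest!: set_zip_leftD simp: less_Suc_eq_le intro: size_list_estimation')

definition coalesced_over :: "layout \<Rightarrow> nat nt \<Rightarrow> bool" where
  "coalesced_over C S \<longleftrightarrow> (\<forall>M \<in> set (rel_modes S C). coalesced M)"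

definition is_composite :: "layout \<Rightarrow> layout \<Rightarrow> layout \<Rightarrow> bool" where
  "is_composite B A C \<longleftrightarrow>
     is_layout C
   \<and> refines (shape C) (shape A)
   \<and> coalesced_over C (shape A)
   \<and> (\<forall>x < lsize A. phi A x < lsize B)
   \<and> (\<forall>x < lsize A. phi C x = phi B (phi A x))"

definition composite :: "layout \<Rightarrow> layout \<Rightarrow> layout" (infixl "\<circ>\<^sub>L" 55) where
  "B \<circ>\<^sub>L A = (THE C. is_composite B A C)"

text \<open>A pointed map from <len S>_* to <len T>_* is encoded as alpha :: nat => nat option
  on 1-based indices, with None playing the role of the base point *.\<close>
definition is_morphism :: "nat nt \<Rightarrow> nat nt \<Rightarrow> (nat \<Rightarrow> nat option) \<Rightarrow> bool" where
  "is_morphism S T \<alpha> \<longleftrightarrow>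
     pos_nt S \<and> pos_nt T
   \<and> (\<forall>i. \<alpha> i \<noteq> None \<longrightarrow> i \<in> {1..len S})
   \<and> (\<forall>i \<in> {1..len S}. \<forall>j. \<alpha> i = Some j \<longrightarrow> j \<in> {1..len T} \<and> entry i S = entry j T)
   \<and> (\<forall>i i' j. \<alpha> i = Some j \<and> \<alpha> i' = Some j \<longrightarrow> i = i')"

definition comp_pm :: "(nat \<Rightarrow> nat option) \<Rightarrow> (nat \<Rightarrow> nat option) \<Rightarrow> (nat \<Rightarrow> nat option)" where
  "comp_pm \<beta> \<alpha> = (\<lambda>i. case \<alpha> i of None \<Rightarrow> None | Some j \<Rightarrow> \<beta> j)"

definition non_degenerate :: "nat nt \<Rightarrow> (nat \<Rightarrow> nat option) \<Rightarrow> bool" where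
  "non_degenerate S \<alpha> \<longleftrightarrow> (\<forall>i \<in> {1..len S}. entry i S = 1 \<longrightarrow> \<alpha> i = None)"

fun index_nt :: "nat \<Rightarrow> 'a nt \<Rightarrow> (nat \<times> 'a) nt"
and index_list :: "nat \<Rightarrow> 'a nt list \<Rightarrow> (nat \<times> 'a) nt list" where
  "index_nt k (Leaf a) = Leaf (k, a)"
| "index_nt k (Node xs) = Node (index_list k xs)"
| "index_list k [] = []"
| "index_list k (x # xs) = index_nt k x # index_list (k + length (flat x)) xs"

definition L_mor :: "nat nt \<Rightarrow> nat nt \<Rightarrow> (nat \<Rightarrow> nat option) \<Rightarrow> layout" where
  "L_mor S T \<alpha> =
     map_nt (\<lambda>(i, s). (s, case \<alpha> i of None \<Rightarrow> 0
                                     | Some j \<Rightarrow> prod_list (take (j - 1) (flat T))))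
            (index_nt 1 S)"

end

theory Submission
  imports Defs
begin

text \<open>Write \<open>x < size S\<close> in mixed radix with digits \<open>x\<^sub>p < entry\<^sub>p(S)\<close>. Then
  \<open>\<Phi>\<^bsub>L_f\<^esub> x\<close> is the number in mixed radix over \<open>T\<close> whose \<open>\<alpha>(p)\<close>-th digit is \<open>x\<^sub>p\<close> and whose
  other digits vanish. Hence \<open>\<Phi>\<^bsub>L_f\<^esub> x < size T\<close>, and reading off the digits of
  \<open>\<Phi>\<^bsub>L_f\<^esub> x\<close> gives \<open>\<Phi>\<^bsub>L_g\<^esub> (\<Phi>\<^bsub>L_f\<^esub> x) = \<Phi>\<^bsub>L_(g\<circ>f)\<^esub> x\<close>.

  It remains to see that \<open>L_(g\<circ>f)\<close> is the only layout with the defining properties of the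
  composite. It has shape \<open>S\<close>, so its relative modes are its leaves \<open>(s, d)\<close>, and
  non-degeneracy of \<open>f\<close> gives \<open>d = 0\<close> whenever \<open>s = 1\<close>. A competitor \<open>C\<close> coalesced over \<open>S\<close>
  with the same layout function has, in its \<open>p\<close>-th relative mode, the function
  \<open>y \<mapsto> y d\<close> on \<open>[0, s)\<close>. A coalesced layout of rank \<open>> 1\<close> is never of this form, as it sends
  \<open>1\<close> to \<open>d\<^sub>1\<close> and \<open>s\<^sub>1\<close> to \<open>d\<^sub>2 \<noteq> s\<^sub>1 d\<^sub>1\<close>; so every relative mode of \<open>C\<close> is the leaf \<open>(s, d)\<close>
  and \<open>C = L_(g\<circ>f)\<close>.\<close>

lemma concat_concat: "concat (concat xss) = concat (map concat xss)"
  by (induction xss) auto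

lemma prod_list_concat: "prod_list (concat xss) = prod_list (map prod_list xss)"
  by (induction xss) simp_all

lemma prod_list_pos: "\<forall>a \<in> set xs. 0 < (a :: nat) \<Longrightarrow> 0 < prod_list xs"
  by (induction xs) auto

lemma flat_map_nt: "flat (map_nt f X) = map f (flat X)"
  by (induction X) (simp_all add: map_concat cong: map_cong)

lemma flat_index_nt:
  "flat (index_nt k (X :: 'a nt)) = zip [k..<k + length (flat X)] (flat X)"
  "concat (map flat (index_list k (xs :: 'a nt list))) =
     zip [k..<k + length (concat (map flat xs))] (concat (map flat xs))"
proof (induction k X and k xs rule: index_nt_index_list.induct)
  case (4 k x xs)
  let ?m = "k + length (flat x)"
  have "[k..<?m + length (concat (map flat xs))] = [k..<?m] @ [?m..<?m + length (concat (map flat xs))]"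
    by (rule upt_add_eq_append) simp
  with 4 show ?case by (simp add: add.assoc)
qed auto

lemma map_nt_snd_index_nt:
  "map_nt snd (index_nt k (X :: 'a nt)) = X"
  "map (map_nt snd) (index_list k (xs :: 'a nt list)) = xs"
  by (induction k X and k xs rule: index_nt_index_list.induct) auto

lemma flat_shape: "flat (shape L) = map fst (flat L)"
  by (simp add: shape_def flat_map_nt)

lemma shape_Node: "shape (Node xs) = Node (map shape xs)"
  by (simp add: shape_def)

lemma nt_size_shape: "nt_size (shape L) = prod_list (map fst (flat L))"
  by (simp add: nt_size_def flat_shape)

lemma is_layout_iff: "is_layout L \<longleftrightarrow> (\<forall>s \<in> fst ` set (flat L). 0 < s)"
  by (auto simp: is_layout_def pos_nt_def flat_shape)

lemma layout_eqI: "shape X = shape Y \<Longrightarrow> flat X = flat Y \<Longrightarrow> X = Y"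
proof (induction X arbitrary: Y)
  case (Leaf a)
  then show ?case by (cases Y) (auto simp: shape_def)
next
  case (Node xs)
  obtain ys where Y: "Y = Node ys"
    using Node.prems(1) by (cases Y) (auto simp: shape_def)
  with Node.prems(1) have shapes: "map shape xs = map shape ys"
    by (simp add: shape_Node)
  then have len: "length xs = length ys" by (rule map_eq_imp_length_eq)
  have shape_nth: "shape (xs ! i) = shape (ys ! i)" if "i < length xs" for i
    using shapes that len by (metis nth_map)
  have "length (flat (xs ! i)) = length (flat (ys ! i))" if "i < length xs" for i
    using shape_nth[OF that] by (metis flat_shape length_map)
  with Node.prems(2) Y len have "map flat xs = map flat ys"
    by (intro concat_injective) (auto simp: in_set_zip)
  then have "flat (xs ! i) = flat (ys ! i)" if "i < length xs" for i
    using that len by (metis nth_map)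
  with shape_nth len have "xs = ys"
    by (simp add: nth_equalityI Node.IH)
  with Y show ?case by simp
qed

lemma refines_refl: "refines X X"
  by (induction X) (auto simp: nt_size_def intro: list.rel_refl_strong)

definition radix_digit :: "nat list \<Rightarrow> nat \<Rightarrow> nat \<Rightarrow> nat" where
  "radix_digit ss x i = x div prod_list (take i ss) mod ss ! i"

definition radix_value :: "nat list \<Rightarrow> (nat \<Rightarrow> nat) \<Rightarrow> nat" where
  "radix_value ss c = (\<Sum>i<length ss. c i * prod_list (take i ss))"

lemma radix_value_Nil [simp]: "radix_value [] c = 0"
  by (simp add: radix_value_def)

lemma radix_value_Cons:
  "radix_value (s # ss) c = c 0 + s * radix_value ss (\<lambda>i. c (Suc i))"
proof -
  have "radix_value (s # ss) c = c 0 + (\<Sum>i<length ss. c (Suc i) * (s * prod_list (take i ss)))"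
    unfolding radix_value_def by (simp add: sum.lessThan_Suc_shift del: sum.lessThan_Suc)
  also have "\<dots> = c 0 + s * radix_value ss (\<lambda>i. c (Suc i))"
    by (simp add: radix_value_def sum_distrib_left algebra_simps)
  finally show ?thesis .
qed

lemma radix_digit_radix_value:
  assumes "\<forall>i<length ss. c i < ss ! i" and "k < length ss"
  shows "radix_digit ss (radix_value ss c) k = c k"
  using assms
proof (induction ss arbitrary: c k)
  case (Cons s ss)
  define v where "v = radix_value ss (\<lambda>i. c (Suc i))"
  have "c 0 < s" using Cons.prems by auto
  then have value_div: "radix_value (s # ss) c div s = v"
    and value_mod: "radix_value (s # ss) c mod s = c 0"
    by (simp_all add: v_def radix_value_Cons)
  show ?case
  proof (cases k)
    case 0
    then show ?thesis by (simp add: radix_digit_def value_mod)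
  next
    case (Suc k')
    have "\<forall>i<length ss. c (Suc i) < ss ! i" using Cons.prems by auto
    then have "radix_digit ss v k' = c (Suc k')"
      unfolding v_def using Cons.prems(2) Suc by (intro Cons.IH) simp_all
    with Suc show ?thesis by (simp add: radix_digit_def div_mult2_eq value_div)
  qed
qed simp

lemma radix_value_less:
  assumes "\<forall>i<length ss. c i < ss ! i"
  shows "radix_value ss c < prod_list ss"
  using assms
proof (induction ss arbitrary: c)
  case (Cons s ss)
  define v where "v = radix_value ss (\<lambda>i. c (Suc i))"
  have "\<forall>i<length ss. c (Suc i) < ss ! i" using Cons.prems by auto
  then have "v < prod_list ss" unfolding v_def by (rule Cons.IH)
  have "c 0 < s" using Cons.prems by auto
  have "c 0 + s * v < s * (v + 1)" using \<open>c 0 < s\<close> by simp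
  also have "\<dots> \<le> s * prod_list ss" using \<open>v < prod_list ss\<close> by (intro mult_le_mono2) simp
  finally show ?case by (simp add: v_def radix_value_Cons)
qed simp

lemma mult_prod_take_less:
  assumes "\<forall>a \<in> set ss. 0 < (a :: nat)" and "p < length ss" and "y < ss ! p"
  shows "y * prod_list (take p ss) < prod_list ss"
proof -
  have "radix_value ss (\<lambda>i. if i = p then y else 0) =
      (\<Sum>i<length ss. if i = p then y * prod_list (take i ss) else 0)"
    unfolding radix_value_def by (intro sum.cong) simp_all
  also have "\<dots> = y * prod_list (take p ss)"
    using assms(2) by simp
  finally have "radix_value ss (\<lambda>i. if i = p then y else 0) = y * prod_list (take p ss)" .
  moreover have "radix_value ss (\<lambda>i. if i = p then y else 0) < prod_list ss"
    using assms by (intro radix_value_less) auto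
  ultimately show ?thesis by simp
qed

lemma flat_phi_Nil [simp]: "flat_phi [] x = 0"
  by (simp add: flat_phi_def)

lemma flat_phi_0 [simp]: "flat_phi sd 0 = 0"
  by (simp add: flat_phi_def)

lemma flat_phi_Cons [simp]: "flat_phi ((s, d) # sd) x = x mod s * d + flat_phi sd (x div s)"
  by (simp add: flat_phi_def sum.lessThan_Suc_shift div_mult2_eq del: sum.lessThan_Suc)

lemma flat_phi_append:
  "flat_phi (sd @ sd') x = flat_phi sd x + flat_phi sd' (x div prod_list (map fst sd))"
  by (induction sd arbitrary: x) (auto simp: div_mult2_eq)

lemma flat_phi_mod: "flat_phi sd (x mod prod_list (map fst sd)) = flat_phi sd x"
proof (induction sd arbitrary: x)
  case (Cons a sd)
  obtain s d where "a = (s, d)" by fastforce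
  moreover have "x mod (s * prod_list (map fst sd)) div s = x div s mod prod_list (map fst sd)"
    by (cases "s = 0") (simp_all add: mod_mult2_eq)
  ultimately show ?case using Cons.IH by (simp add: mod_mult2_eq)
qed simp

definition mor_stride :: "nat nt \<Rightarrow> (nat \<Rightarrow> nat option) \<Rightarrow> nat \<Rightarrow> nat" where
  "mor_stride T \<alpha> i = (case \<alpha> i of None \<Rightarrow> 0 | Some j \<Rightarrow> prod_list (take (j - 1) (flat T)))"

lemma flat_L_mor:
  "flat (L_mor S T \<alpha>) = map (\<lambda>p. (flat S ! p, mor_stride T \<alpha> (Suc p))) [0..<len S]"
proof -
  have "flat (L_mor S T \<alpha>) = map (\<lambda>(i, s). (s, mor_stride T \<alpha> i)) (zip [1..<1 + len S] (flat S))"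
    unfolding L_mor_def flat_map_nt flat_index_nt len_def mor_stride_def by simp
  also have "\<dots> = map (\<lambda>p. (flat S ! p, mor_stride T \<alpha> (Suc p))) [0..<len S]"
    by (rule nth_equalityI) (auto simp: len_def simp del: upt_Suc)
  finally show ?thesis .
qed

lemma shape_L_mor: "shape (L_mor S T \<alpha>) = S"
proof -
  have "shape (L_mor S T \<alpha>) = map_nt snd (index_nt 1 S)"
    unfolding shape_def L_mor_def nt.map_comp by (rule nt.map_cong) auto
  then show ?thesis by (simp add: map_nt_snd_index_nt)
qed

lemma phi_L_mor:
  "phi (L_mor S T \<alpha>) x = (\<Sum>p<len S. radix_digit (flat S) x p * mor_stride T \<alpha> (Suc p))"
proof -
  have "map fst (flat (L_mor S T \<alpha>)) = flat S"
    by (metis flat_shape shape_L_mor)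
  then show ?thesis
    unfolding phi_def flat_phi_def radix_digit_def
    by (intro sum.cong) (auto simp: flat_L_mor)
qed

lemma pos_nt_nth: "pos_nt S \<Longrightarrow> p < len S \<Longrightarrow> 0 < flat S ! p"
  unfolding pos_nt_def len_def by auto

text \<open>Pointed maps use 1-based indices while list positions are 0-based, hence \<open>\<alpha> (Suc p)\<close>.\<close>
lemma is_morphism_SomeD:
  assumes "is_morphism S T \<alpha>" and "\<alpha> (Suc p) = Some j"
  shows "p < len S" and "0 < j" and "j \<le> len T" and "flat S ! p = flat T ! (j - 1)"
proof -
  have "Suc p \<in> {1..len S}"
    using assms unfolding is_morphism_def by blast
  moreover from this have "j \<in> {1..len T} \<and> entry (Suc p) S = entry j T"
    using assms unfolding is_morphism_def by blast
  ultimately show "p < len S" and "0 < j" and "j \<le> len T" and "flat S ! p = flat T ! (j - 1)"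
    by (simp_all add: entry_def)
qed

lemma is_morphism_inj: "is_morphism S T \<alpha> \<Longrightarrow> \<alpha> i = Some j \<Longrightarrow> \<alpha> i' = Some j \<Longrightarrow> i = i'"
  unfolding is_morphism_def by blast

text \<open>The mixed-radix digits of \<open>x\<close> over \<open>S\<close>, moved to the positions in \<open>T\<close> given by
  \<open>\<alpha>\<close>; positions outside the image of \<open>\<alpha>\<close> get digit 0. Since \<open>\<alpha>\<close> is injective, the
  sum has at most one nonzero term.\<close>
definition push_digits :: "nat nt \<Rightarrow> (nat \<Rightarrow> nat option) \<Rightarrow> nat \<Rightarrow> nat \<Rightarrow> nat" where
  "push_digits S \<alpha> x q =
     (\<Sum>p<len S. if \<alpha> (Suc p) = Some (Suc q) then radix_digit (flat S) x p else 0)"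

lemma push_digits_Some:
  assumes "is_morphism S T \<alpha>" and "\<alpha> (Suc p) = Some (Suc q)"
  shows "push_digits S \<alpha> x q = radix_digit (flat S) x p"
proof -
  have "\<alpha> (Suc p') = Some (Suc q) \<longleftrightarrow> p' = p" for p'
    using assms(2) is_morphism_inj[OF assms(1) _ assms(2), of "Suc p'"] by auto
  then have "push_digits S \<alpha> x q = (\<Sum>p'<len S. if p' = p then radix_digit (flat S) x p' else 0)"
    unfolding push_digits_def by simp
  also have "\<dots> = radix_digit (flat S) x p"
    using is_morphism_SomeD(1)[OF assms] by simp
  finally show ?thesis .
qed

lemma push_digits_less:
  assumes "is_morphism S T \<alpha>" and "q < len T"
  shows "push_digits S \<alpha> x q < flat T ! q"
proof (cases "\<exists>p. \<alpha> (Suc p) = Some (Suc q)")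
  case True
  then obtain p where p: "\<alpha> (Suc p) = Some (Suc q)" by blast
  have "0 < flat S ! p"
    using assms(1) is_morphism_SomeD(1)[OF assms(1) p] by (intro pos_nt_nth) (simp add: is_morphism_def)
  then show ?thesis
    using push_digits_Some[OF assms(1) p] is_morphism_SomeD(4)[OF assms(1) p]
    by (simp add: radix_digit_def)
next
  case False
  then have "push_digits S \<alpha> x q = 0" by (simp add: push_digits_def)
  moreover have "0 < flat T ! q"
    using assms by (intro pos_nt_nth) (simp_all add: is_morphism_def)
  ultimately show ?thesis by simp
qed

lemma sum_push_digits:
  assumes "is_morphism S T \<alpha>"
  shows "(\<Sum>q<len T. push_digits S \<alpha> x q * h q) =
    (\<Sum>p<len S. case \<alpha> (Suc p) of None \<Rightarrow> 0 | Some j \<Rightarrow> radix_digit (flat S) x p * h (j - 1))"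
proof -
  have "(\<Sum>q<len T. push_digits S \<alpha> x q * h q) =
      (\<Sum>q<len T. \<Sum>p<len S. if \<alpha> (Suc p) = Some (Suc q) then radix_digit (flat S) x p * h q else 0)"
    unfolding push_digits_def sum_distrib_right by (intro sum.cong refl) simp
  also have "\<dots> =
      (\<Sum>p<len S. \<Sum>q<len T. if \<alpha> (Suc p) = Some (Suc q) then radix_digit (flat S) x p * h q else 0)"
    by (rule sum.swap)
  also have "\<dots> = (\<Sum>p<len S. case \<alpha> (Suc p) of None \<Rightarrow> 0 | Some j \<Rightarrow> radix_digit (flat S) x p * h (j - 1))"
  proof (intro sum.cong refl)
    fix p
    show "(\<Sum>q<len T. if \<alpha> (Suc p) = Some (Suc q) then radix_digit (flat S) x p * h q else 0) =
        (case \<alpha> (Suc p) of None \<Rightarrow> 0 | Some j \<Rightarrow> radix_digit (flat S) x p * h (j - 1))"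
    proof (cases "\<alpha> (Suc p)")
      case (Some j)
      with is_morphism_SomeD(2,3)[OF assms Some]
      have "j = Suc q \<longleftrightarrow> q = j - 1" and "j - 1 < len T" for q
        by auto
      with Some show ?thesis by simp
    qed simp
  qed
  finally show ?thesis .
qed

lemma phi_L_mor_eq_radix_value:
  assumes "is_morphism S T \<alpha>"
  shows "phi (L_mor S T \<alpha>) x = radix_value (flat T) (push_digits S \<alpha> x)"
proof -
  have "phi (L_mor S T \<alpha>) x = (\<Sum>p<len S. case \<alpha> (Suc p) of None \<Rightarrow> 0
      | Some j \<Rightarrow> radix_digit (flat S) x p * prod_list (take (j - 1) (flat T)))"
    unfolding phi_L_mor mor_stride_def by (intro sum.cong refl) (simp split: option.split)
  also have "\<dots> = (\<Sum>q<len T. push_digits S \<alpha> x q * prod_list (take q (flat T)))"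
    by (rule sum_push_digits[OF assms, symmetric])
  also have "\<dots> = radix_value (flat T) (push_digits S \<alpha> x)"
    by (simp add: radix_value_def len_def)
  finally show ?thesis .
qed

lemma radix_digit_phi_L_mor:
  assumes "is_morphism S T \<alpha>" and "q < len T"
  shows "radix_digit (flat T) (phi (L_mor S T \<alpha>) x) q = push_digits S \<alpha> x q"
  using assms push_digits_less[OF assms(1)]
  by (simp add: phi_L_mor_eq_radix_value radix_digit_radix_value len_def)

lemma phi_L_mor_less:
  assumes "is_morphism S T \<alpha>"
  shows "phi (L_mor S T \<alpha>) x < nt_size T"
  using push_digits_less[OF assms]
  by (simp add: phi_L_mor_eq_radix_value[OF assms] radix_value_less nt_size_def len_def)

lemma phi_L_mor_comp:
  assumes "is_morphism S T \<alpha>"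
  shows "phi (L_mor T U \<beta>) (phi (L_mor S T \<alpha>) x) = phi (L_mor S U (comp_pm \<beta> \<alpha>)) x"
proof -
  have "phi (L_mor T U \<beta>) (phi (L_mor S T \<alpha>) x) =
      (\<Sum>q<len T. push_digits S \<alpha> x q * mor_stride U \<beta> (Suc q))"
    unfolding phi_L_mor[of T U \<beta>] by (intro sum.cong refl) (simp add: radix_digit_phi_L_mor[OF assms])
  also have "\<dots> = (\<Sum>p<len S. case \<alpha> (Suc p) of None \<Rightarrow> 0
      | Some j \<Rightarrow> radix_digit (flat S) x p * mor_stride U \<beta> (Suc (j - 1)))"
    by (rule sum_push_digits[OF assms])
  also have "\<dots> = (\<Sum>p<len S. radix_digit (flat S) x p * mor_stride U (comp_pm \<beta> \<alpha>) (Suc p))"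
    using is_morphism_SomeD(2)[OF assms]
    by (intro sum.cong refl) (simp add: mor_stride_def comp_pm_def split: option.split)
  also have "\<dots> = phi (L_mor S U (comp_pm \<beta> \<alpha>)) x"
    by (rule phi_L_mor[symmetric])
  finally show ?thesis .
qed

lemma rel_modes_shape: "rel_modes (shape C) C = map Leaf (flat C)"
proof (induction C)
  case (Leaf a)
  then show ?case by (cases a) (simp add: shape_def)
next
  case (Node ys)
  have "zip (map shape ys) ys = map (\<lambda>y. (shape y, y)) ys"
    by (induction ys) auto
  with Node show ?case
    by (simp add: shape_Node map_concat cong: map_cong)
qed

lemma refines_shape_NodeD:
  assumes "refines (shape (Node ys)) (Node xs)"
  shows "length xs = length ys" and "\<And>x y. (x, y) \<in> set (zip xs ys) \<Longrightarrow> refines (shape y) x"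
proof -
  from assms have all2: "list_all2 refines (map shape ys) xs"
    by (simp add: shape_Node)
  then show "length xs = length ys"
    by (auto dest: list_all2_lengthD)
  fix x y
  assume "(x, y) \<in> set (zip xs ys)"
  then obtain i where "i < length xs" "i < length ys" "x = xs ! i" "y = ys ! i"
    by (auto simp: in_set_zip)
  with all2 show "refines (shape y) x"
    by (simp add: list_all2_conv_all_nth)
qed

lemma concat_flat_rel_modes:
  "refines (shape C) S \<Longrightarrow> concat (map flat (rel_modes S C)) = flat C"
proof (induction S C rule: rel_modes.induct)
  case (2 xs ys)
  note refines_shape_NodeD[OF 2(2)]
  with 2(1) have "concat (map flat (rel_modes (Node xs) (Node ys))) =
      concat (map (\<lambda>(x, y). flat y) (zip xs ys))"
    by (simp add: map_concat concat_concat split_def cong: map_cong)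
  also have "\<dots> = flat (Node ys)"
    using \<open>length xs = length ys\<close> by (induction xs ys rule: list_induct2) simp_all
  finally show ?case .
qed (simp_all add: shape_def)

lemma nt_size_rel_modes:
  "refines (shape C) S \<Longrightarrow> map (\<lambda>M. nt_size (shape M)) (rel_modes S C) = flat S"
proof (induction S C rule: rel_modes.induct)
  case (2 xs ys)
  note refines_shape_NodeD[OF 2(2)]
  with 2(1) have "map (\<lambda>M. nt_size (shape M)) (rel_modes (Node xs) (Node ys)) =
      concat (map (\<lambda>(x, y). flat x) (zip xs ys))"
    by (simp add: map_concat split_def cong: map_cong)
  also have "\<dots> = flat (Node xs)"
    using \<open>length xs = length ys\<close> by (induction xs ys rule: list_induct2) simp_all
  finally show ?case .
qed (simp_all add: shape_def)

lemma shape_eq_if_rel_modes_leaves: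
  "refines (shape C) S \<Longrightarrow> \<forall>M \<in> set (rel_modes S C). is_leaf M \<Longrightarrow> shape C = S"
proof (induction S C rule: rel_modes.induct)
  case (1 n C)
  then show ?case by (cases C) (auto simp: shape_def nt_size_def)
next
  case (2 xs ys)
  note refines_shape_NodeD[OF 2(2)]
  have "map shape ys = map shape (map snd (zip xs ys))"
    using \<open>length xs = length ys\<close> by simp
  also have "\<dots> = map fst (zip xs ys)"
    using 2 \<open>\<And>x y. (x, y) \<in> set (zip xs ys) \<Longrightarrow> refines (shape y) x\<close> by fastforce
  also have "\<dots> = xs"
    using \<open>length xs = length ys\<close> by simp
  finally show ?case by (simp add: shape_Node)
qed (simp add: shape_def)

lemma phi_rel_modes_nth:
  assumes "refines (shape C) S" and "pos_nt S" and "p < len S" and "y < flat S ! p"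
  shows "phi C (y * prod_list (take p (flat S))) = phi (rel_modes S C ! p) y"
proof -
  define Ms where "Ms = rel_modes S C"
  have sizes: "map (\<lambda>M. nt_size (shape M)) Ms = flat S"
    unfolding Ms_def using assms(1) by (rule nt_size_rel_modes)
  then have "p < length Ms"
    using assms(3) unfolding len_def by (metis length_map)
  then have "Ms = take p Ms @ Ms ! p # drop (Suc p) Ms"
    by (simp add: id_take_nth_drop)
  then have "flat C = concat (map flat (take p Ms)) @ flat (Ms ! p) @ concat (map flat (drop (Suc p) Ms))"
    using concat_flat_rel_modes[OF assms(1)] unfolding Ms_def[symmetric]
    by (metis concat.simps(2) concat_append map_append list.simps(9))
  moreover have "prod_list (map fst (concat (map flat (take p Ms)))) =
      prod_list (take p (map (\<lambda>M. nt_size (shape M)) Ms))"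
    by (simp add: map_concat prod_list_concat nt_size_shape take_map comp_def)
  moreover note sizes
  moreover have "prod_list (map fst (flat (Ms ! p))) = flat S ! p"
    using sizes \<open>p < length Ms\<close> by (metis nt_size_shape nth_map)
  moreover have "0 < prod_list (take p (flat S))"
    using assms(2) by (intro prod_list_pos) (auto simp: pos_nt_def dest: in_set_takeD)
  ultimately show ?thesis
    unfolding phi_def Ms_def[symmetric] using assms(4)
    by (simp add: flat_phi_append flat_phi_mod[of "concat (map flat (take p Ms))", symmetric])
qed

lemma coalesced_Leaf: "coalesced (Leaf (s, d)) \<longleftrightarrow> s = 1 \<and> d = 0 \<or> 1 < s"
  by (auto simp: coalesced_def)

lemma coalesced_over_shape_iff:
  assumes "is_layout C"
  shows "coalesced_over C (shape C) \<longleftrightarrow> (\<forall>(s, d) \<in> set (flat C). s = 1 \<longrightarrow> d = 0)"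
  using assms
  by (fastforce simp: coalesced_over_def rel_modes_shape coalesced_Leaf is_layout_iff)

lemma coalesced_not_linear_if_not_leaf:
  assumes "coalesced L" and "\<not> is_leaf L" and "is_layout L"
  shows "\<not> (\<forall>y < lsize L. phi L y = y * d)"
proof -
  obtain xs where "L = Node xs" and leaves: "\<forall>x \<in> set xs. is_leaf x" and "1 < length xs"
    and coalesced_flat: "flat_coalesced (flat L)"
    using assms(1,2) by (auto simp: coalesced_def)
  from leaves have "length (flat (Node xs)) = length xs"
    by (induction xs) (auto elim: is_leaf.elims)
  with \<open>L = Node xs\<close> \<open>1 < length xs\<close> have "Suc (Suc 0) \<le> length (flat L)"
    by simp
  then obtain u1 u2 rest where "flat L = u1 # u2 # rest"
    by (auto simp: Suc_le_length_iff)
  then obtain s1 d1 s2 d2 where flat_eq: "flat L = (s1, d1) # (s2, d2) # rest"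
    by (cases u1, cases u2) simp
  with coalesced_flat have "s1 \<noteq> 1" "s2 \<noteq> 1" "s1 * d1 \<noteq> d2"
    unfolding flat_coalesced_def by (auto dest: spec[of _ 0] spec[of _ 1])
  moreover have "0 < s1" "0 < s2" "0 < prod_list (map fst rest)"
    using assms(3) unfolding is_layout_iff flat_eq by (auto intro!: prod_list_pos)
  ultimately have "1 < s1" "1 < s2" and "phi L 1 = d1" "phi L s1 = d2"
    by (simp_all add: flat_eq phi_def)
  have "s2 \<le> s2 * prod_list (map fst rest)"
    using \<open>0 < prod_list (map fst rest)\<close> by simp
  with \<open>1 < s2\<close> have "1 < s2 * prod_list (map fst rest)"
    by linarith
  then have "s1 * 1 < s1 * (s2 * prod_list (map fst rest))"
    using \<open>1 < s1\<close> by (intro mult_less_mono2) simp_all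
  then have "s1 < lsize L"
    by (simp add: lsize_def nt_size_shape flat_eq)
  show ?thesis
  proof
    assume linear: "\<forall>y < lsize L. phi L y = y * d"
    with \<open>1 < s1\<close> \<open>s1 < lsize L\<close> have "phi L 1 = d" and "phi L s1 = s1 * d"
      by simp_all
    with \<open>phi L 1 = d1\<close> \<open>phi L s1 = d2\<close> \<open>s1 * d1 \<noteq> d2\<close> show False
      by simp
  qed
qed

lemma coalesced_linear_eq_Leaf:
  assumes "coalesced M" and "is_layout M" and "lsize M = s"
    and linear: "\<forall>y < s. phi M y = y * d" and "s = 1 \<Longrightarrow> d = 0"
  shows "M = Leaf (s, d)"
proof (cases M)
  case (Leaf a)
  obtain s' d' where "M = Leaf (s', d')"
    using Leaf by (cases a) simp
  moreover from this assms(3) have "s' = s"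
    by (simp add: lsize_def shape_def nt_size_def)
  moreover have "d' = d"
  proof (cases "s = 1")
    case True
    with assms(1,5) \<open>M = Leaf (s', d')\<close> \<open>s' = s\<close> show ?thesis
      by (simp add: coalesced_Leaf)
  next
    case False
    with assms(1) \<open>M = Leaf (s', d')\<close> \<open>s' = s\<close> have "1 < s"
      by (simp add: coalesced_Leaf)
    with linear have "phi M 1 = d" by simp
    with \<open>M = Leaf (s', d')\<close> \<open>s' = s\<close> \<open>1 < s\<close> show ?thesis
      by (simp add: phi_def)
  qed
  ultimately show ?thesis by simp
next
  case (Node xs)
  then have "\<not> is_leaf M" by simp
  then have "\<not> (\<forall>y < lsize M. phi M y = y * d)"
    using assms(1,2) coalesced_not_linear_if_not_leaf by blast
  with assms(3) linear show ?thesis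
    by simp
qed

lemma phi_rel_modes_nth_linear:
  assumes "is_layout C" and "refines (shape C') (shape C)"
    and same_phi: "\<forall>x < lsize C. phi C' x = phi C x"
    and "p < length (flat C)" and "flat C ! p = (s, d)" and "y < s"
  shows "phi (rel_modes (shape C) C' ! p) y = y * d"
proof -
  let ?S = "shape C" and ?x = "y * prod_list (take p (flat (shape C)))"
  have pos: "pos_nt ?S"
    using assms(1) by (simp add: is_layout_def)
  have p: "p < len ?S" and s: "flat ?S ! p = s"
    using assms(4,5) by (simp_all add: len_def flat_shape)
  have "phi (rel_modes ?S C' ! p) y = phi C' ?x"
    using phi_rel_modes_nth[OF assms(2) pos p] assms(6) s by simp
  also have "\<dots> = phi C ?x"
    using same_phi pos p s assms(6)
    by (simp add: lsize_def nt_size_def pos_nt_def mult_prod_take_less len_def)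
  also have "\<dots> = phi (rel_modes ?S C ! p) y"
    using phi_rel_modes_nth[OF refines_refl pos p] assms(6) s by simp
  also have "\<dots> = y * d"
    using assms(4-6) by (simp add: rel_modes_shape phi_def)
  finally show ?thesis .
qed

lemma rel_modes_eq_if_coalesced_over_shape:
  assumes C: "is_layout C" "coalesced_over C (shape C)"
    and C': "is_layout C'" "refines (shape C') (shape C)" "coalesced_over C' (shape C)"
    and same_phi: "\<forall>x < lsize C. phi C' x = phi C x"
  shows "rel_modes (shape C) C' = map Leaf (flat C)"
proof (rule nth_equalityI)
  let ?Ms = "rel_modes (shape C) C'"
  have sizes: "map (\<lambda>M. nt_size (shape M)) ?Ms = map fst (flat C)"
    using nt_size_rel_modes[OF C'(2)] by (simp add: flat_shape)
  then show "length ?Ms = length (map Leaf (flat C))"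
    by (metis length_map)
  fix p
  assume "p < length ?Ms"
  then have p: "p < length (flat C)"
    using sizes by (metis length_map)
  obtain s d where sd: "flat C ! p = (s, d)" by fastforce
  have "?Ms ! p = Leaf (s, d)"
  proof (rule coalesced_linear_eq_Leaf)
    show "coalesced (?Ms ! p)"
      using C'(3) \<open>p < length ?Ms\<close> by (simp add: coalesced_over_def)
    show "is_layout (?Ms ! p)"
      using C'(1) \<open>p < length ?Ms\<close> concat_flat_rel_modes[OF C'(2), symmetric]
      by (auto simp: is_layout_iff)
    have "nt_size (shape (?Ms ! p)) = map fst (flat C) ! p"
      using sizes \<open>p < length ?Ms\<close> by (metis nth_map)
    then show "lsize (?Ms ! p) = s"
      using sd p by (simp add: lsize_def)
    show "s = 1 \<Longrightarrow> d = 0"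
      using C sd p by (auto simp: coalesced_over_shape_iff dest!: nth_mem)
    show "\<forall>y < s. phi (?Ms ! p) y = y * d"
      using phi_rel_modes_nth_linear[OF C(1) C'(2) same_phi p sd] by blast
  qed
  with sd p show "?Ms ! p = map Leaf (flat C) ! p"
    by simp
qed

lemma eq_if_coalesced_over_shape:
  assumes "is_layout C" "coalesced_over C (shape C)"
    and "is_layout C'" "refines (shape C') (shape C)" "coalesced_over C' (shape C)"
    and "\<forall>x < lsize C. phi C' x = phi C x"
  shows "C' = C"
proof (rule layout_eqI)
  have modes: "rel_modes (shape C) C' = map Leaf (flat C)"
    using assms by (rule rel_modes_eq_if_coalesced_over_shape)
  with assms(4) show "shape C' = shape C"
    by (intro shape_eq_if_rel_modes_leaves) auto
  from modes show "flat C' = flat C"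
    using concat_flat_rel_modes[OF assms(4)] by (simp add: comp_def)
qed

lemma composite_eqI:
  assumes "is_composite B A C" and "shape C = shape A"
  shows "B \<circ>\<^sub>L A = C"
  unfolding composite_def
proof (rule the_equality)
  show "is_composite B A C" by fact
  fix C'
  assume "is_composite B A C'"
  with assms show "C' = C"
    by (intro eq_if_coalesced_over_shape) (auto simp: is_composite_def lsize_def)
qed

lemma non_degenerate_comp_pm: "non_degenerate S \<alpha> \<Longrightarrow> non_degenerate S (comp_pm \<beta> \<alpha>)"
  by (simp add: non_degenerate_def comp_pm_def)

lemma coalesced_over_L_mor:
  assumes "pos_nt S" and "non_degenerate S \<alpha>"
  shows "coalesced_over (L_mor S T \<alpha>) S"
proof -
  have "is_layout (L_mor S T \<alpha>)"
    using assms(1) by (simp add: is_layout_def shape_L_mor)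
  moreover have "mor_stride T \<alpha> (Suc p) = 0" if "p < len S" and "flat S ! p = 1" for p
    using assms(2) that by (simp add: non_degenerate_def entry_def mor_stride_def)
  ultimately show ?thesis
    using coalesced_over_shape_iff[of "L_mor S T \<alpha>"] by (auto simp: shape_L_mor flat_L_mor)
qed

lemma is_composite_L_mor:
  assumes "is_morphism S T \<alpha>" and "non_degenerate S \<alpha>"
  shows "is_composite (L_mor T U \<beta>) (L_mor S T \<alpha>) (L_mor S U (comp_pm \<beta> \<alpha>))"
proof -
  have "pos_nt S"
    using assms(1) by (simp add: is_morphism_def)
  then show ?thesis
    using assms phi_L_mor_less[OF assms(1)] phi_L_mor_comp[OF assms(1)]
    by (simp add: is_composite_def shape_L_mor is_layout_def refines_refl lsize_def
        coalesced_over_L_mor non_degenerate_comp_pm)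
qed

theorem mainTheorem2:
  fixes S T U :: "nat nt" and \<alpha> \<beta> :: "nat \<Rightarrow> nat option"
  assumes "is_morphism S T \<alpha>" and "is_morphism T U \<beta>"
    and "non_degenerate S \<alpha>" and "non_degenerate T \<beta>"
  shows "L_mor S U (comp_pm \<beta> \<alpha>) = L_mor T U \<beta> \<circ>\<^sub>L L_mor S T \<alpha>"
proof (rule composite_eqI[symmetric])
  show "is_composite (L_mor T U \<beta>) (L_mor S T \<alpha>) (L_mor S U (comp_pm \<beta> \<alpha>))"
    using assms(1,3) by (rule is_composite_L_mor)
  show "shape (L_mor S U (comp_pm \<beta> \<alpha>)) = shape (L_mor S T \<alpha>)"
    by (simp add: shape_L_mor)
qed

end
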